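(* Let $T$ be a strongly connected tournament on $n$ vertices which has an edge $e$ from $u$ to $v$ such that every directed cycle of $T$ contains $e$. Then the vertices of $T$ can be labeled $v_1,\ldots,v_n$ so that $T=D_n$, $u=v_n$ and $v=v_1$, where $D_n$ is the tournament in which, for $1\le i<j\le n$ with $(i,j)\ne(1,n)$, the edge between $v_i$ and $v_j$ is directed from $v_i$ to $v_j$, and the edge between $v_1$ and $v_n$ is directed from $v_n$ to $v_1$.
   Context: A tournament is an orientation of a complete graph; it is strongly connected if for any two vertices there is a directed path from each to the other. *)

theory Defs
  imports Main
begin

text \<open>A digraph is given by a vertex set V and an arc relation A (A x y: arc from x to y).\<close>

definition tournament :: "'a set \<Rightarrow> ('a \<Rightarrow> 'a \<Rightarrow> bool) \<Rightarrow> bool" where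
  "tournament V A \<longleftrightarrow> finite V
     \<and> (\<forall>x y. A x y \<longrightarrow> x \<in> V \<and> y \<in> V)
     \<and> (\<forall>x. \<not> A x x)
     \<and> (\<forall>x\<in>V. \<forall>y\<in>V. x \<noteq> y \<longrightarrow> (A x y \<longleftrightarrow> \<not> A y x))"

definition strongly_connected :: "'a set \<Rightarrow> ('a \<Rightarrow> 'a \<Rightarrow> bool) \<Rightarrow> bool" where
  "strongly_connected V A \<longleftrightarrow> (\<forall>x\<in>V. \<forall>y\<in>V. A\<^sup>*\<^sup>* x y)"

definition dicycle :: "'a set \<Rightarrow> ('a \<Rightarrow> 'a \<Rightarrow> bool) \<Rightarrow> 'a list \<Rightarrow> bool" where
  "dicycle V A c \<longleftrightarrow> length c \<ge> 2 \<and> distinct c \<and> set c \<subseteq> V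
     \<and> (\<forall>i < length c. A (c ! i) (c ! ((i + 1) mod length c)))"

definition cycle_contains_arc :: "'a list \<Rightarrow> 'a \<Rightarrow> 'a \<Rightarrow> bool" where
  "cycle_contains_arc c u v \<longleftrightarrow>
     (\<exists>i < length c. c ! i = u \<and> c ! ((i + 1) mod length c) = v)"

definition D_arc :: "nat \<Rightarrow> nat \<Rightarrow> nat \<Rightarrow> bool" where
  "D_arc n i j \<longleftrightarrow> (i < j \<and> (i, j) \<noteq> (1, n)) \<or> (i = n \<and> j = 1)"

end

theory Submission
  imports Defs "HOL-Library.Transitive_Closure_Table"
begin

text \<open>Deleting the arc \<open>uv\<close> leaves an acyclic digraph, so its vertices can be labelled
  \<open>1..n\<close> with every remaining arc going forward. Strong connectivity gives \<open>f 1\<close> an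
  in-arc and \<open>f n\<close> an out-arc; neither can go forward, so both are \<open>uv\<close>, i.e.
  \<open>f 1 = v\<close> and \<open>f n = u\<close>. In a tournament every other pair is joined by exactly one
  arc, which must go forward, and this is precisely \<open>D\<^sub>n\<close>.\<close>

abbreviation delete_arc :: "('a \<Rightarrow> 'a \<Rightarrow> bool) \<Rightarrow> 'a \<Rightarrow> 'a \<Rightarrow> 'a \<Rightarrow> 'a \<Rightarrow> bool" where
  "delete_arc A u v \<equiv> \<lambda>x y. A x y \<and> (x, y) \<noteq> (u, v)"

definition topological_labelling ::
    "nat \<Rightarrow> (nat \<Rightarrow> 'a) \<Rightarrow> 'a set \<Rightarrow> ('a \<Rightarrow> 'a \<Rightarrow> bool) \<Rightarrow> bool" where
  "topological_labelling n f V B \<longleftrightarrow>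
     bij_betw f {1..n} V \<and> (\<forall>i\<in>{1..n}. \<forall>j\<in>{1..n}. B (f i) (f j) \<longrightarrow> i < j)"

lemma tournament_arcs_in:
  "tournament V A \<Longrightarrow> A x y \<Longrightarrow> x \<in> V \<and> y \<in> V"
  unfolding tournament_def by blast

lemma tournament_irrefl: "tournament V A \<Longrightarrow> \<not> A x x"
  unfolding tournament_def by blast

lemma tournament_asym: "tournament V A \<Longrightarrow> A x y \<Longrightarrow> \<not> A y x"
  unfolding tournament_def by metis

lemma tournament_total:
  "tournament V A \<Longrightarrow> x \<in> V \<Longrightarrow> y \<in> V \<Longrightarrow> x \<noteq> y \<Longrightarrow> A x y \<or> A y x"
  unfolding tournament_def by blast

lemma dicycle_if_tranclp_loop:
  assumes "A\<^sup>+\<^sup>+ x x"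
    and irrefl: "\<And>x. \<not> A x x" and arcs_in: "\<And>x y. A x y \<Longrightarrow> x \<in> V \<and> y \<in> V"
  obtains c where "dicycle V A c"
proof -
  obtain y where xy: "A x y" and "A\<^sup>*\<^sup>* y x"
    using \<open>A\<^sup>+\<^sup>+ x x\<close> by (metis tranclpD)
  then obtain ys where "rtrancl_path A y ys x"
    by (auto simp: rtranclp_eq_rtrancl_path)
  then obtain xs where path: "rtrancl_path A y xs x" and "distinct (y # xs)"
    by (rule rtrancl_path_distinct)
  have "xs \<noteq> []"
    using path xy irrefl by (auto elim: rtrancl_path.cases)
  have "dicycle V A (y # xs)"
    unfolding dicycle_def
  proof (intro conjI allI impI)
    show "2 \<le> length (y # xs)" using \<open>xs \<noteq> []\<close> by (cases xs) auto
    show "distinct (y # xs)" by fact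
    have "z \<in> V" if "z \<in> set xs" for z
      using rtrancl_path_Range[OF path that] arcs_in by blast
    then show "set (y # xs) \<subseteq> V"
      using xy arcs_in by auto
    fix i assume i: "i < length (y # xs)"
    show "A ((y # xs) ! i) ((y # xs) ! ((i + 1) mod length (y # xs)))"
    proof (cases "i < length xs")
      case True
      then show ?thesis using rtrancl_path_nth[OF path True] by simp
    next
      case False
      then have "i = length xs" using i by simp
      moreover have "(y # xs) ! length xs = last xs"
        using \<open>xs \<noteq> []\<close> by (cases xs rule: rev_cases) (auto simp: nth_append)
      ultimately show ?thesis
        using rtrancl_path_last[OF path \<open>xs \<noteq> []\<close>] xy by simp
    qed
  qed
  then show thesis by (rule that)
qed

lemma acyclic_has_sink:
  assumes "finite V" "V \<noteq> {}" and acyclic: "\<And>x. \<not> B\<^sup>+\<^sup>+ x x"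
  obtains s where "s \<in> V" "\<And>y. y \<in> V \<Longrightarrow> \<not> B s y"
proof -
  have "asymp_on V B\<^sup>+\<^sup>+"
    unfolding asymp_on_def using acyclic by (blast intro: tranclp_trans)
  moreover have "transp_on V B\<^sup>+\<^sup>+"
    unfolding transp_on_def by (blast intro: tranclp_trans)
  ultimately obtain s where s: "s \<in> V" and max: "\<forall>y\<in>V. y \<noteq> s \<longrightarrow> \<not> B\<^sup>+\<^sup>+ s y"
    using Finite_Set.bex_max_element[OF \<open>finite V\<close> _ _ \<open>V \<noteq> {}\<close>] by blast
  show thesis
  proof (rule that[OF s])
    fix y assume "y \<in> V"
    show "\<not> B s y"
    proof
      assume "B s y"
      then have "B\<^sup>+\<^sup>+ s y" by (rule tranclp.r_into_trancl)
      then show False using max \<open>y \<in> V\<close> acyclic by (cases "y = s") auto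
    qed
  qed
qed

lemma topological_labelling_exists:
  assumes "finite V" "card V = n" and acyclic: "\<And>x. \<not> B\<^sup>+\<^sup>+ x x"
  shows "\<exists>f. topological_labelling n f V B"
  using assms(1,2)
proof (induction n arbitrary: V)
  case 0
  then have "V = {}" by simp
  then show ?case by (simp add: topological_labelling_def bij_betw_def)
next
  case (Suc n)
  have "V \<noteq> {}"
    using Suc.prems by auto
  then obtain s where s: "s \<in> V" and sink: "\<And>y. y \<in> V \<Longrightarrow> \<not> B s y"
    using acyclic_has_sink[OF \<open>finite V\<close> _ acyclic] by blast
  have "finite (V - {s})" "card (V - {s}) = n"
    using Suc.prems s by simp_all
  then obtain f where f: "topological_labelling n f (V - {s}) B"
    by (rule Suc.IH[THEN exE])
  define g where "g = f(Suc n := s)"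
  have "g i = f i" if "i \<in> {1..n}" for i
    using that by (simp add: g_def)
  then have "bij_betw g {1..n} (V - {s})"
    using f bij_betw_cong unfolding topological_labelling_def by blast
  then have "bij_betw g ({1..n} \<union> {Suc n}) ((V - {s}) \<union> {g (Suc n)})"
    by (intro notIn_Un_bij_betw) (auto simp: g_def)
  moreover have "{1..n} \<union> {Suc n} = {1..Suc n}" "(V - {s}) \<union> {g (Suc n)} = V"
    using s by (auto simp: g_def)
  ultimately have bij: "bij_betw g {1..Suc n} V" by simp
  have "i < j" if "i \<in> {1..Suc n}" "j \<in> {1..Suc n}" "B (g i) (g j)" for i j
  proof (cases "i = Suc n")
    case True
    then show ?thesis using that sink bij_betw_apply[OF bij] by (auto simp: g_def)
  next
    case False
    then show ?thesis using f that by (cases "j = Suc n") (auto simp: topological_labelling_def g_def)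
  qed
  with bij show ?case unfolding topological_labelling_def by blast
qed

lemma topological_labelling_no_arc_into_first:
  assumes "topological_labelling n f V B" "1 \<le> n" "w \<in> V"
  shows "\<not> B w (f 1)"
proof
  assume "B w (f 1)"
  obtain j where "j \<in> {1..n}" "w = f j"
    using assms(1,3) unfolding topological_labelling_def bij_betw_def by auto
  moreover have "1 \<in> {1..n}" using assms(2) by simp
  ultimately have "j < 1"
    using assms(1) \<open>B w (f 1)\<close> unfolding topological_labelling_def by blast
  then show False using \<open>j \<in> {1..n}\<close> by simp
qed

lemma topological_labelling_no_arc_out_of_last:
  assumes "topological_labelling n f V B" "1 \<le> n" "w \<in> V"
  shows "\<not> B (f n) w"
proof
  assume "B (f n) w"
  obtain j where "j \<in> {1..n}" "w = f j"
    using assms(1,3) unfolding topological_labelling_def bij_betw_def by auto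
  moreover have "n \<in> {1..n}" using assms(2) by simp
  ultimately have "n < j"
    using assms(1) \<open>B (f n) w\<close> unfolding topological_labelling_def by blast
  then show False using \<open>j \<in> {1..n}\<close> by simp
qed

lemma strongly_connected_has_in_arc:
  assumes "strongly_connected V A" "x \<in> V" "y \<in> V" "x \<noteq> y"
  obtains w where "A w y"
  using assms unfolding strongly_connected_def by (metis rtranclp.cases)

lemma strongly_connected_has_out_arc:
  assumes "strongly_connected V A" "x \<in> V" "y \<in> V" "x \<noteq> y"
  obtains w where "A x w"
  using assms unfolding strongly_connected_def by (metis converse_rtranclpE)

lemma delete_arc_acyclic_if_all_dicycles_use_arc:
  assumes irrefl: "\<And>x. \<not> A x x" and arcs_in: "\<And>x y. A x y \<Longrightarrow> x \<in> V \<and> y \<in> V"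
    and all_use: "\<forall>c. dicycle V A c \<longrightarrow> cycle_contains_arc c u v"
  shows "\<not> (delete_arc A u v)\<^sup>+\<^sup>+ x x"
proof
  assume "(delete_arc A u v)\<^sup>+\<^sup>+ x x"
  then obtain c where c: "dicycle V (delete_arc A u v) c"
    by (rule dicycle_if_tranclp_loop[where V = V]) (use irrefl arcs_in in auto)
  then have "dicycle V A c" by (auto simp: dicycle_def)
  then show False
    using all_use c by (auto simp: cycle_contains_arc_def dicycle_def)
qed

lemma topological_labelling_delete_arc_ends:
  assumes sc: "strongly_connected V A" and arcs_in: "\<And>x y. A x y \<Longrightarrow> x \<in> V \<and> y \<in> V"
    and lab: "topological_labelling n f V (delete_arc A u v)"
    and "u \<in> V" "v \<in> V" "u \<noteq> v"
  shows "f 1 = v" "f n = u"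
proof -
  have "1 \<le> n"
    using lab \<open>u \<in> V\<close> by (auto simp: topological_labelling_def bij_betw_def)
  then have "f 1 \<in> V" "f n \<in> V"
    using lab by (auto simp: topological_labelling_def bij_betw_def)
  obtain x where "x \<in> V" "x \<noteq> f 1"
    using \<open>u \<in> V\<close> \<open>v \<in> V\<close> \<open>u \<noteq> v\<close> by blast
  then obtain w where "A w (f 1)"
    using strongly_connected_has_in_arc[OF sc] \<open>f 1 \<in> V\<close> by blast
  moreover have "\<not> delete_arc A u v w (f 1)"
    using topological_labelling_no_arc_into_first[OF lab \<open>1 \<le> n\<close>] arcs_in \<open>A w (f 1)\<close> by blast
  ultimately show "f 1 = v" by simp
  obtain y where "y \<in> V" "y \<noteq> f n"
    using \<open>u \<in> V\<close> \<open>v \<in> V\<close> \<open>u \<noteq> v\<close> by blast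
  then obtain w' where "A (f n) w'"
    using strongly_connected_has_out_arc[OF sc] \<open>f n \<in> V\<close> by blast
  moreover have "\<not> delete_arc A u v (f n) w'"
    using topological_labelling_no_arc_out_of_last[OF lab \<open>1 \<le> n\<close>] arcs_in \<open>A (f n) w'\<close> by blast
  ultimately show "f n = u" by simp
qed

lemma tournament_arc_iff_D_arc:
  assumes T: "tournament V A" and "A u v" and "2 \<le> n"
    and lab: "topological_labelling n f V (delete_arc A u v)"
    and "f 1 = v" "f n = u" and i: "i \<in> {1..n}" and j: "j \<in> {1..n}"
  shows "A (f i) (f j) \<longleftrightarrow> D_arc n i j"
proof -
  have inj: "inj_on f {1..n}" and fV: "f i \<in> V" "f j \<in> V"
    using lab i j by (auto simp: topological_labelling_def bij_betw_def)
  have forward: "k < l"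
    if "k \<in> {1..n}" "l \<in> {1..n}" "A (f k) (f l)" "(f k, f l) \<noteq> (u, v)" for k l
    using lab that by (auto simp: topological_labelling_def)
  have range_ends: "1 \<in> {1..n}" "n \<in> {1..n}" using \<open>2 \<le> n\<close> by auto
  consider "i = j" | "(i, j) = (1, n)" | "(i, j) = (n, 1)"
    | "i \<noteq> j" "(i, j) \<noteq> (1, n)" "(i, j) \<noteq> (n, 1)"
    by auto
  then show ?thesis
  proof cases
    case 1
    then show ?thesis using tournament_irrefl[OF T] \<open>2 \<le> n\<close> by (auto simp: D_arc_def)
  next
    case 2
    then show ?thesis using tournament_asym[OF T] \<open>A u v\<close> \<open>f 1 = v\<close> \<open>f n = u\<close> \<open>2 \<le> n\<close>
      by (auto simp: D_arc_def)
  next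
    case 3
    then show ?thesis using \<open>A u v\<close> \<open>f 1 = v\<close> \<open>f n = u\<close> by (simp add: D_arc_def)
  next
    case 4
    have "(f i, f j) \<noteq> (u, v)" "(f j, f i) \<noteq> (u, v)"
      using 4 inj i j range_ends \<open>f 1 = v\<close> \<open>f n = u\<close> by (auto dest: inj_onD)
    moreover have "f i \<noteq> f j" using 4 inj i j by (auto dest: inj_onD)
    ultimately have "A (f i) (f j) \<longleftrightarrow> i < j"
      using tournament_total[OF T fV] tournament_asym[OF T] forward[OF i j] forward[OF j i] by auto
    then show ?thesis using 4 by (auto simp: D_arc_def)
  qed
qed

theorem mainTheorem11:
  fixes V :: "'a set" and A :: "'a \<Rightarrow> 'a \<Rightarrow> bool" and n :: nat and u v :: 'a
  assumes "tournament V A"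
    and "card V = n"
    and "strongly_connected V A"
    and "A u v"
    and "\<forall>c. dicycle V A c \<longrightarrow> cycle_contains_arc c u v"
  shows "\<exists>f. bij_betw f {1..n} V \<and> f n = u \<and> f 1 = v
           \<and> (\<forall>i\<in>{1..n}. \<forall>j\<in>{1..n}. A (f i) (f j) \<longleftrightarrow> D_arc n i j)"
proof -
  note irrefl = tournament_irrefl[OF assms(1)] and arcs_in = tournament_arcs_in[OF assms(1)]
  have "finite V"
    using assms(1) unfolding tournament_def by blast
  have "u \<noteq> v" "u \<in> V" "v \<in> V"
    using irrefl arcs_in assms(4) by metis+
  then have "2 \<le> n"
    using assms(2) \<open>finite V\<close> by (metis card_2_iff card_mono empty_subsetI insert_subset)
  obtain f where lab: "topological_labelling n f V (delete_arc A u v)"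
    using topological_labelling_exists[OF \<open>finite V\<close> assms(2)]
      delete_arc_acyclic_if_all_dicycles_use_arc[OF irrefl arcs_in assms(5)] by blast
  have ends: "f 1 = v" "f n = u"
    using topological_labelling_delete_arc_ends[OF assms(3) arcs_in lab \<open>u \<in> V\<close> \<open>v \<in> V\<close> \<open>u \<noteq> v\<close>]
    by auto
  have "bij_betw f {1..n} V"
    using lab unfolding topological_labelling_def by blast
  then show ?thesis
    using ends tournament_arc_iff_D_arc[OF assms(1,4) \<open>2 \<le> n\<close> lab ends] by blast
qed

end
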